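(* Let $\mathcal{F} = (\mathbb{R}^{d^{L+1}})^{\mathbb{R}^{d^0}}$ with the product topology and usual Borel product $\sigma$-algebra, let $P_{f_n}$ ($n \ge 1$) and $P_f$ be probability distributions on $\mathcal{F}$ with $P_{f_n} \Rightarrow P_f$, let $D = \{(x_i,y_i)\}_{i=1}^m$ be a fixed finite dataset with inputs $\mathcal{X} = \{x_i\}$, and let $\ell \colon \mathbb{R}^{|D| d^{L+1}} \to [0,\infty)$ be a continuous bounded likelihood satisfying the likelihood assumption described in the context, with $\int \ell(f(\mathcal{X}))\,dP_f(f) > 0$. Let $P_{f_n\mid D}$, $P_{f\mid D}$ be the posteriors defined by $\frac{dP_{f_n\mid D}}{dP_{f_n}}(f) = \ell(f(\mathcal{X}))/\int \ell(g(\mathcal{X}))\,dP_{f_n}(g)$ and $\frac{dP_{f\mid D}}{dP_{f}}(f) = \ell(f(\mathcal{X}))/\int \ell(g(\mathcal{X}))\,dP_{f}(g)$. If $h \colon \mathcal{F} \to \mathbb{R}$ is continuous and $\int |h|\, dP_{f_n} \to \int |h| \, dP_f < \infty$, then $$\int h \, dP_{f_n \mid D} \to \int h \, dP_{f\mid D}.$$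
   Context: Here $f(\mathcal{X}) = [f(x)]_{x \in \mathcal{X}} \in \mathbb{R}^{|D| d^{L+1}}$ and $\Rightarrow$ denotes weak convergence ($\int g\,dP_n \to \int g\,dP$ for all continuous bounded real $g$). Likelihood assumption: the targets $\mathcal{Y}=\{y_i\}$ depend on the network parameters and inputs only through the outputs $f_n(\mathcal{X})$; there is a measure $\nu$ with $P_{\mathcal{Y}\mid f_n(\mathcal{X})} \ll \nu$ for every value of $f_n(\mathcal{X})$; and the density $\frac{dP_{\mathcal{Y}\mid f_n(\mathcal{X})}}{d\nu}(\mathcal{Y})$, as a function of $f_n(\mathcal{X})$, equals the same continuous bounded function $\ell$ for all $n$. *)

theory Defs
  imports "HOL-Probability.Probability"
begin

text \<open>The function space F = (R^dL)^(R^d0), with the product sigma-algebra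
  (product of Borel sigma-algebras); its topology is the product topology,
  which is the library's topology on the function type.\<close>
definition FM :: "('a \<Rightarrow> 'b::topological_space) measure" where
  "FM = (\<Pi>\<^sub>M x\<in>UNIV. borel)"

definition weak_conv_fun :: "(nat \<Rightarrow> 'f::topological_space measure) \<Rightarrow> 'f measure \<Rightarrow> bool" where
  "weak_conv_fun Ps P \<longleftrightarrow>
     (\<forall>g :: 'f \<Rightarrow> real. continuous_on UNIV g \<and> bounded (range g) \<longrightarrow>
        (\<lambda>n. integral\<^sup>L (Ps n) g) \<longlonglongrightarrow> integral\<^sup>L P g)"

definition evalX :: "('i::finite \<Rightarrow> 'a) \<Rightarrow> ('a \<Rightarrow> real ^ 'd) \<Rightarrow> real ^ 'd ^ 'i" where
  "evalX xs f = (\<chi> i. f (xs i))"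

definition posterior :: "('a \<Rightarrow> real ^ 'd) measure \<Rightarrow> (real ^ 'd ^ 'i \<Rightarrow> real)
     \<Rightarrow> ('i::finite \<Rightarrow> 'a) \<Rightarrow> ('a \<Rightarrow> real ^ 'd) measure" where
  "posterior P l xs = density P (\<lambda>f. ennreal (l (evalX xs f) / (\<integral>g. l (evalX xs g) \<partial>P)))"

end

theory Submission
  imports Defs
begin

text \<open>The posterior integral of \<open>h\<close> is the ratio of the prior integrals of \<open>h \<cdot> L\<close> and \<open>L\<close>,
  where \<open>L f = l (f(X))\<close> is continuous, nonnegative and bounded by some \<open>B\<close>. The denominators
  converge by weak convergence. For the numerators, weak convergence makes integrals of
  nonnegative continuous functions lower semicontinuous (truncate, then use weak convergence);
  applied to \<open>B \<bar>h\<bar> + h \<cdot> L\<close> and \<open>B \<bar>h\<bar> - h \<cdot> L\<close>, together with the assumed convergence of the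
  integrals of \<open>\<bar>h\<bar>\<close>, this squeezes the integrals of \<open>h \<cdot> L\<close> from both sides.\<close>

lemma weak_conv_fun_integral_lower:
  fixes g :: "'f::topological_space \<Rightarrow> real"
  assumes weak: "weak_conv_fun Ps P"
    and g_cont: "continuous_on UNIV g" and g_nonneg: "\<And>x. 0 \<le> g x"
    and g_int: "integrable P g"
    and g_int_eventually: "eventually (\<lambda>n. integrable (Ps n) g) sequentially"
    and y: "y < integral\<^sup>L P g"
  shows "eventually (\<lambda>n. y < integral\<^sup>L (Ps n) g) sequentially"
proof -
  define g_trunc where "g_trunc M = (\<lambda>x. min (g x) (real M))" for M :: nat
  have "(\<lambda>M. integral\<^sup>L P (g_trunc M)) \<longlonglongrightarrow> integral\<^sup>L P g"
  proof (rule integral_dominated_convergence[where w = g])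
    show "AE x in P. (\<lambda>M. g_trunc M x) \<longlonglongrightarrow> g x"
    proof (intro AE_I2 tendsto_eventually)
      fix x
      obtain N :: nat where "g x \<le> real N" using real_arch_simple by blast
      then show "eventually (\<lambda>M. g_trunc M x = g x) sequentially"
        unfolding eventually_sequentially g_trunc_def
        by (intro exI[of _ N]) (auto simp: min_def)
    qed
    show "AE x in P. norm (g_trunc M x) \<le> g x" for M
      using g_nonneg by (auto simp: g_trunc_def min_def)
  qed (use g_int in \<open>auto simp: g_trunc_def intro!: borel_measurable_min\<close>)
  from order_tendstoD(1)[OF this y]
  obtain M where M: "y < integral\<^sup>L P (g_trunc M)"
    unfolding eventually_sequentially by blast
  have "continuous_on UNIV (g_trunc M)"
    unfolding g_trunc_def by (intro continuous_on_min g_cont continuous_on_const)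
  moreover have "bounded (range (g_trunc M))"
    unfolding bounded_iff g_trunc_def using g_nonneg by (intro exI[of _ "real M"]) auto
  ultimately have "(\<lambda>n. integral\<^sup>L (Ps n) (g_trunc M)) \<longlonglongrightarrow> integral\<^sup>L P (g_trunc M)"
    using weak unfolding weak_conv_fun_def by blast
  from order_tendstoD(1)[OF this M] g_int_eventually
  show ?thesis
  proof eventually_elim
    case (elim n)
    have "integrable (Ps n) (g_trunc M)"
      using elim(2) g_nonneg
      by (intro Bochner_Integration.integrable_bound[OF elim(2)]) (auto simp: g_trunc_def)
    then have "integral\<^sup>L (Ps n) (g_trunc M) \<le> integral\<^sup>L (Ps n) g"
      using elim(2) by (intro integral_mono) (auto simp: g_trunc_def)
    with elim(1) show ?case by linarith
  qed
qed

lemma weak_conv_fun_integral_dominated_lower: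
  fixes g G :: "'f::topological_space \<Rightarrow> real"
  assumes weak: "weak_conv_fun Ps P"
    and g_cont: "continuous_on UNIV g" and G_cont: "continuous_on UNIV G"
    and dominated: "\<And>x. \<bar>g x\<bar> \<le> G x"
    and g_meas: "g \<in> borel_measurable P" "\<And>n. g \<in> borel_measurable (Ps n)"
    and G_int: "integrable P G"
    and G_int_eventually: "eventually (\<lambda>n. integrable (Ps n) G) sequentially"
    and G_conv: "(\<lambda>n. integral\<^sup>L (Ps n) G) \<longlonglongrightarrow> integral\<^sup>L P G"
    and y: "y < integral\<^sup>L P g"
  shows "eventually (\<lambda>n. y < integral\<^sup>L (Ps n) g) sequentially"
proof -
  have integrable_if_G: "integrable M g" if "integrable M G" "g \<in> borel_measurable M" for M
  proof (rule Bochner_Integration.integrable_bound[OF that])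
    show "AE x in M. norm (g x) \<le> norm (G x)"
      using dominated by (intro AE_I2) (metis abs_ge_self order_trans real_norm_def)
  qed
  define e where "e = integral\<^sup>L P g - y"
  have e: "e > 0" using y by (simp add: e_def)
  have sum_int_P: "integrable P (\<lambda>x. G x + g x)"
    by (intro Bochner_Integration.integrable_add G_int integrable_if_G g_meas(1))
  have sum_int_eventually: "eventually (\<lambda>n. integrable (Ps n) (\<lambda>x. G x + g x)) sequentially"
    using G_int_eventually
    by eventually_elim (intro Bochner_Integration.integrable_add integrable_if_G g_meas(2))
  have sum_cont: "continuous_on UNIV (\<lambda>x. G x + g x)"
    by (intro continuous_intros G_cont g_cont)
  have sum_nonneg: "0 \<le> G x + g x" for x
    using dominated[of x] by linarith
  have "integral\<^sup>L P (\<lambda>x. G x + g x) - e / 2 < integral\<^sup>L P (\<lambda>x. G x + g x)"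
    using e by simp
  from weak_conv_fun_integral_lower[OF weak sum_cont sum_nonneg sum_int_P sum_int_eventually this]
  have sum_lower: "eventually (\<lambda>n. integral\<^sup>L P (\<lambda>x. G x + g x) - e / 2
      < integral\<^sup>L (Ps n) (\<lambda>x. G x + g x)) sequentially" .
  have "integral\<^sup>L P G < integral\<^sup>L P G + e / 2" using e by simp
  from order_tendstoD(2)[OF G_conv this] sum_lower G_int_eventually
  show ?thesis
  proof eventually_elim
    case (elim n)
    have "integral\<^sup>L (Ps n) (\<lambda>x. G x + g x) = integral\<^sup>L (Ps n) G + integral\<^sup>L (Ps n) g"
      by (intro Bochner_Integration.integral_add elim(3) integrable_if_G g_meas(2))
    moreover have "integral\<^sup>L P (\<lambda>x. G x + g x) = integral\<^sup>L P G + integral\<^sup>L P g"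
      by (intro Bochner_Integration.integral_add G_int integrable_if_G g_meas(1))
    ultimately show ?case using elim(1,2) unfolding e_def by argo
  qed
qed

lemma weak_conv_fun_integral_dominated:
  fixes g G :: "'f::topological_space \<Rightarrow> real"
  assumes weak: "weak_conv_fun Ps P"
    and g_cont: "continuous_on UNIV g" and G_cont: "continuous_on UNIV G"
    and dominated: "\<And>x. \<bar>g x\<bar> \<le> G x"
    and g_meas: "g \<in> borel_measurable P" "\<And>n. g \<in> borel_measurable (Ps n)"
    and G_int: "integrable P G"
    and G_int_eventually: "eventually (\<lambda>n. integrable (Ps n) G) sequentially"
    and G_conv: "(\<lambda>n. integral\<^sup>L (Ps n) G) \<longlonglongrightarrow> integral\<^sup>L P G"
  shows "(\<lambda>n. integral\<^sup>L (Ps n) g) \<longlonglongrightarrow> integral\<^sup>L P g"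
proof (rule order_tendstoI)
  fix y assume "y < integral\<^sup>L P g"
  then show "eventually (\<lambda>n. y < integral\<^sup>L (Ps n) g) sequentially"
    by (rule weak_conv_fun_integral_dominated_lower[OF assms])
next
  fix y assume "integral\<^sup>L P g < y"
  then have "- y < integral\<^sup>L P (\<lambda>x. - g x)" by simp
  moreover have "continuous_on UNIV (\<lambda>x. - g x)"
    using g_cont by (rule continuous_on_minus)
  moreover have "\<bar>- g x\<bar> \<le> G x" for x
    using dominated[of x] by simp
  moreover have "(\<lambda>x. - g x) \<in> borel_measurable P" "(\<lambda>x. - g x) \<in> borel_measurable (Ps n)" for n
    using g_meas by simp_all
  ultimately have "eventually (\<lambda>n. - y < integral\<^sup>L (Ps n) (\<lambda>x. - g x)) sequentially"
    by (intro weak_conv_fun_integral_dominated_lower[OF weak _ G_cont _ _ _ G_int G_int_eventually G_conv])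
  then show "eventually (\<lambda>n. integral\<^sup>L (Ps n) g < y) sequentially"
    by simp
qed

lemma weak_conv_fun_integral_mult_bounded:
  fixes h L :: "'f::topological_space \<Rightarrow> real"
  assumes weak: "weak_conv_fun Ps P"
    and h_cont: "continuous_on UNIV h" and L_cont: "continuous_on UNIV L"
    and L_nonneg: "\<And>x. 0 \<le> L x" and L_le: "\<And>x. L x \<le> B"
    and hL_meas: "(\<lambda>x. h x * L x) \<in> borel_measurable P"
      "\<And>n. (\<lambda>x. h x * L x) \<in> borel_measurable (Ps n)"
    and h_int: "integrable P h"
    and h_int_eventually: "eventually (\<lambda>n. integrable (Ps n) h) sequentially"
    and abs_conv: "(\<lambda>n. \<integral>x. \<bar>h x\<bar> \<partial>Ps n) \<longlonglongrightarrow> (\<integral>x. \<bar>h x\<bar> \<partial>P)"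
  shows "(\<lambda>n. \<integral>x. h x * L x \<partial>Ps n) \<longlonglongrightarrow> (\<integral>x. h x * L x \<partial>P)"
proof (rule weak_conv_fun_integral_dominated[OF weak _ _ _ hL_meas, where G = "\<lambda>x. B * \<bar>h x\<bar>"])
  show "continuous_on UNIV (\<lambda>x. h x * L x)" "continuous_on UNIV (\<lambda>x. B * \<bar>h x\<bar>)"
    by (intro continuous_intros h_cont L_cont)+
  show "\<bar>h x * L x\<bar> \<le> B * \<bar>h x\<bar>" for x
    using L_nonneg[of x] L_le[of x] by (simp add: abs_mult mult.commute mult_right_mono)
  show "integrable P (\<lambda>x. B * \<bar>h x\<bar>)"
    using h_int by simp
  show "eventually (\<lambda>n. integrable (Ps n) (\<lambda>x. B * \<bar>h x\<bar>)) sequentially"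
    using h_int_eventually by eventually_elim simp
  show "(\<lambda>n. \<integral>x. B * \<bar>h x\<bar> \<partial>Ps n) \<longlonglongrightarrow> (\<integral>x. B * \<bar>h x\<bar> \<partial>P)"
    using tendsto_mult_left[OF abs_conv] by simp
qed

lemma nn_integral_abs_tendsto_finite:
  fixes h :: "'a \<Rightarrow> real"
  assumes h_meas: "h \<in> borel_measurable M" "\<And>n. h \<in> borel_measurable (Ms n)"
    and conv: "(\<lambda>n. \<integral>\<^sup>+ x. ennreal \<bar>h x\<bar> \<partial>Ms n) \<longlonglongrightarrow> (\<integral>\<^sup>+ x. ennreal \<bar>h x\<bar> \<partial>M)"
    and finite: "(\<integral>\<^sup>+ x. ennreal \<bar>h x\<bar> \<partial>M) < \<infinity>"
  shows "integrable M h"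
    and "eventually (\<lambda>n. integrable (Ms n) h) sequentially"
    and "(\<lambda>n. \<integral>x. \<bar>h x\<bar> \<partial>Ms n) \<longlonglongrightarrow> (\<integral>x. \<bar>h x\<bar> \<partial>M)"
proof -
  show "integrable M h"
    using h_meas(1) finite by (simp add: integrable_iff_bounded)
  show "eventually (\<lambda>n. integrable (Ms n) h) sequentially"
    using order_tendstoD(2)[OF conv finite]
    by eventually_elim (simp add: integrable_iff_bounded h_meas(2))
  have integral_abs: "(\<integral>x. \<bar>h x\<bar> \<partial>N) = enn2real (\<integral>\<^sup>+ x. ennreal \<bar>h x\<bar> \<partial>N)"
    if "h \<in> borel_measurable N" for N
    using that by (intro integral_eq_nn_integral) auto
  have "(\<integral>\<^sup>+ x. ennreal \<bar>h x\<bar> \<partial>M) = ennreal (enn2real (\<integral>\<^sup>+ x. ennreal \<bar>h x\<bar> \<partial>M))"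
    using finite by (simp add: less_top)
  with conv have "(\<lambda>n. enn2real (\<integral>\<^sup>+ x. ennreal \<bar>h x\<bar> \<partial>Ms n))
      \<longlonglongrightarrow> enn2real (\<integral>\<^sup>+ x. ennreal \<bar>h x\<bar> \<partial>M)"
    by (intro tendsto_enn2real) simp_all
  then show "(\<lambda>n. \<integral>x. \<bar>h x\<bar> \<partial>Ms n) \<longlonglongrightarrow> (\<integral>x. \<bar>h x\<bar> \<partial>M)"
    using h_meas by (simp add: integral_abs)
qed

lemma continuous_on_evalX: "continuous_on UNIV (evalX xs)"
  unfolding evalX_def by (intro continuous_on_vec_lambda continuous_on_product_coordinates)

lemma evalX_measurable:
  fixes xs :: "'i::finite \<Rightarrow> 'a"
  shows "(evalX xs :: ('a \<Rightarrow> real ^ 'd) \<Rightarrow> _) \<in> borel_measurable FM"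
  unfolding borel_measurable_euclidean_space[where 'c = "real ^ 'd ^ 'i"]
proof
  fix b :: "real ^ 'd ^ 'i" assume "b \<in> Basis"
  then obtain i u where b: "b = axis i u" unfolding Basis_vec_def by auto
  have "(\<lambda>f::'a \<Rightarrow> real ^ 'd. f (xs i)) \<in> borel_measurable FM"
    unfolding FM_def by (rule measurable_component_singleton) simp
  then have "(\<lambda>f::'a \<Rightarrow> real ^ 'd. f (xs i) \<bullet> u) \<in> borel_measurable FM"
    by (rule borel_measurable_inner[OF _ borel_measurable_const])
  moreover have "evalX xs f \<bullet> b = f (xs i) \<bullet> u" for f :: "'a \<Rightarrow> real ^ 'd"
    unfolding b inner_axis by (simp add: evalX_def)
  ultimately show "(\<lambda>f. evalX xs f \<bullet> b) \<in> borel_measurable FM" by simp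
qed

lemma integral_posterior:
  fixes M :: "('a \<Rightarrow> real ^ 'd) measure" and xs :: "'i::finite \<Rightarrow> 'a"
    and h :: "('a \<Rightarrow> real ^ 'd) \<Rightarrow> real"
  assumes L_meas: "(\<lambda>f. l (evalX xs f)) \<in> borel_measurable M"
    and h_meas: "h \<in> borel_measurable M" and l_nonneg: "\<And>z. 0 \<le> l z"
  shows "(\<integral>f. h f \<partial>posterior M l xs)
    = (\<integral>f. h f * l (evalX xs f) \<partial>M) / (\<integral>f. l (evalX xs f) \<partial>M)"
proof -
  define Z where "Z = (\<integral>f. l (evalX xs f) \<partial>M)"
  have Z_nonneg: "0 \<le> Z"
    unfolding Z_def by (rule integral_nonneg_AE) (simp add: l_nonneg)
  have "(\<lambda>f. l (evalX xs f) / Z) \<in> borel_measurable M"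
    by (rule borel_measurable_divide[OF L_meas borel_measurable_const])
  then have "(\<integral>f. h f \<partial>posterior M l xs) = (\<integral>f. (l (evalX xs f) / Z) *\<^sub>R h f \<partial>M)"
    unfolding posterior_def Z_def[symmetric]
    using h_meas Z_nonneg l_nonneg by (intro integral_density) simp_all
  also have "\<dots> = (\<integral>f. h f * l (evalX xs f) \<partial>M) / Z" by (simp add: mult.commute)
  finally show ?thesis unfolding Z_def .
qed

theorem corollary1:
  fixes Ps :: "nat \<Rightarrow> (real ^ 'd0 \<Rightarrow> real ^ 'dL) measure"
    and P :: "(real ^ 'd0 \<Rightarrow> real ^ 'dL) measure"
    and xs :: "'m::finite \<Rightarrow> real ^ 'd0"
    and l :: "real ^ 'dL ^ 'm \<Rightarrow> real"
    and h :: "(real ^ 'd0 \<Rightarrow> real ^ 'dL) \<Rightarrow> real"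
  assumes Ps_prob: "\<And>n. prob_space (Ps n)" and Ps_sets: "\<And>n. sets (Ps n) = sets FM"
    and P_prob: "prob_space P" and P_sets: "sets P = sets FM"
    and weak: "weak_conv_fun Ps P"
    and l_cont: "continuous_on UNIV l" and l_bdd: "bounded (range l)"
    and l_nonneg: "\<And>z. 0 \<le> l z"
    and l_pos: "(\<integral>f. l (evalX xs f) \<partial>P) > 0"
    and h_cont: "continuous_on UNIV h"
    and h_meas: "h \<in> borel_measurable FM"
    and h_conv: "(\<lambda>n. \<integral>\<^sup>+ f. ennreal \<bar>h f\<bar> \<partial>(Ps n)) \<longlonglongrightarrow> (\<integral>\<^sup>+ f. ennreal \<bar>h f\<bar> \<partial>P)"
    and h_fin: "(\<integral>\<^sup>+ f. ennreal \<bar>h f\<bar> \<partial>P) < \<infinity>"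
  shows "(\<lambda>n. \<integral>f. h f \<partial>(posterior (Ps n) l xs)) \<longlonglongrightarrow> (\<integral>f. h f \<partial>(posterior P l xs))"
proof -
  define L where "L = (\<lambda>f. l (evalX xs f))"
  obtain B where B: "\<And>z. norm (l z) \<le> B" using l_bdd unfolding bounded_iff by auto
  have L_nonneg: "0 \<le> L f" and L_le: "L f \<le> B" for f
    using l_nonneg B[of "evalX xs f"] by (auto simp: L_def)
  have L_cont: "continuous_on UNIV L"
    unfolding L_def by (rule continuous_on_compose2[OF l_cont continuous_on_evalX]) auto
  have L_bdd: "bounded (range L)"
    using l_bdd unfolding L_def by (rule bounded_subset) auto
  have L_meas: "L \<in> borel_measurable FM"
    unfolding L_def
    by (rule measurable_compose[OF evalX_measurable borel_measurable_continuous_onI[OF l_cont]])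
  have meas_P: "borel_measurable P = (borel_measurable FM :: (_ \<Rightarrow> real) set)"
    and meas_Ps: "\<And>n. borel_measurable (Ps n) = (borel_measurable FM :: (_ \<Rightarrow> real) set)"
    by (rule measurable_cong_sets[OF P_sets refl], rule measurable_cong_sets[OF Ps_sets refl])
  have h_meas': "h \<in> borel_measurable P" "\<And>n. h \<in> borel_measurable (Ps n)"
    using h_meas by (simp_all add: meas_P meas_Ps)
  note h_integrable = nn_integral_abs_tendsto_finite[OF h_meas' h_conv h_fin]
  have numerator: "(\<lambda>n. \<integral>f. h f * L f \<partial>Ps n) \<longlonglongrightarrow> (\<integral>f. h f * L f \<partial>P)"
    using h_meas L_meas
    by (intro weak_conv_fun_integral_mult_bounded[OF weak h_cont L_cont L_nonneg L_le _ _
          h_integrable]) (simp_all add: meas_P meas_Ps)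
  have denominator: "(\<lambda>n. \<integral>f. L f \<partial>Ps n) \<longlonglongrightarrow> (\<integral>f. L f \<partial>P)"
    using weak L_cont L_bdd unfolding weak_conv_fun_def by blast
  have "(\<lambda>n. (\<integral>f. h f * L f \<partial>Ps n) / (\<integral>f. L f \<partial>Ps n))
      \<longlonglongrightarrow> (\<integral>f. h f * L f \<partial>P) / (\<integral>f. L f \<partial>P)"
    using l_pos unfolding L_def[symmetric] by (intro tendsto_divide numerator denominator) auto
  moreover have "(\<integral>f. h f \<partial>posterior M l xs) = (\<integral>f. h f * L f \<partial>M) / (\<integral>f. L f \<partial>M)"
    if "borel_measurable M = (borel_measurable FM :: (_ \<Rightarrow> real) set)" for M
    unfolding L_def
    by (rule integral_posterior) (use L_meas h_meas l_nonneg in \<open>simp_all add: that L_def\<close>)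
  ultimately show ?thesis using meas_P meas_Ps by simp
qed

end
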